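(* Let $\lambda/\mu$ be a border strip with $n$ cells, let $Q_{\lambda/\mu}$ be its border strip poset, and let $\omega$ be a reversed Schur labeling. Then $$e_q^{\mathrm{inv}}(Q_{\lambda/\mu},\omega)=e_q^{\mathrm{maj}}(Q_{\lambda/\mu},\omega).$$
   Context: English notation: $[\lambda]=\{(i,j):1\le i\le\ell(\lambda),1\le j\le\lambda_i\}$, $[\lambda/\mu]=[\lambda]\setminus[\mu]$, content $c(i,j)=j-i$. A border strip is a skew shape whose diagram is edge-connected with no $2\times2$ square. Its poset $Q_{\lambda/\mu}$ on $[\lambda/\mu]$ has $(i,j)\le(i',j')$ iff $i\ge i'$ and $j\ge j'$. A reversed Schur labeling is a bijection $\omega:[\lambda/\mu]\to[n]$ whose values strictly decrease as the cells are listed in increasing order of content. Each linear extension (order-preserving bijection $g:Q_{\lambda/\mu}\to[n]$) gives the word $\sigma=\omega\circ g^{-1}=\sigma_1\cdots\sigma_n$; $\mathrm{maj}(\sigma)=\sum_{i:\sigma_i>\sigma_{i+1}}i$ and $\mathrm{inv}(\sigma)=\#\{(i,j):i<j,\ \sigma_i>\sigma_j\}$. $e_q^{\mathrm{stat}}(Q_{\lambda/\mu},\omega)=\sum_g q^{\mathrm{stat}(\omega\circ g^{-1})}$ for $\mathrm{stat}\in\{\mathrm{maj},\mathrm{inv}\}$. *)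

theory Defs
  imports "HOL-Computational_Algebra.Polynomial" "HOL-Library.FuncSet"
begin

text \<open>Partitions as lists of positive weakly decreasing parts; cells are 1-based
  (row, column) pairs in English notation.\<close>

definition is_partition :: "nat list \<Rightarrow> bool" where
  "is_partition lam \<longleftrightarrow> sorted_wrt (\<ge>) lam \<and> 0 \<notin> set lam"

definition diagram :: "nat list \<Rightarrow> (nat \<times> nat) set" where
  "diagram lam = {(i, j). 1 \<le> i \<and> i \<le> length lam \<and> 1 \<le> j \<and> j \<le> lam ! (i - 1)}"

definition contained :: "nat list \<Rightarrow> nat list \<Rightarrow> bool" where
  "contained mu lam \<longleftrightarrow> length mu \<le> length lam \<and> (\<forall>i < length mu. mu ! i \<le> lam ! i)"

definition skew_diagram :: "nat list \<Rightarrow> nat list \<Rightarrow> (nat \<times> nat) set" where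
  "skew_diagram lam mu = diagram lam - diagram mu"

definition content :: "nat \<times> nat \<Rightarrow> int" where
  "content c = int (snd c) - int (fst c)"

definition edge_adjacent :: "nat \<times> nat \<Rightarrow> nat \<times> nat \<Rightarrow> bool" where
  "edge_adjacent a b \<longleftrightarrow>
     (fst a = fst b \<and> (snd b = snd a + 1 \<or> snd a = snd b + 1)) \<or>
     (snd a = snd b \<and> (fst b = fst a + 1 \<or> fst a = fst b + 1))"

definition edge_connected :: "(nat \<times> nat) set \<Rightarrow> bool" where
  "edge_connected D \<longleftrightarrow> D \<noteq> {} \<and>
     (\<forall>a\<in>D. \<forall>b\<in>D. (\<lambda>x y. x \<in> D \<and> y \<in> D \<and> edge_adjacent x y)\<^sup>*\<^sup>* a b)"

definition no_2x2_square :: "(nat \<times> nat) set \<Rightarrow> bool" where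
  "no_2x2_square D \<longleftrightarrow>
     \<not> (\<exists>i j. (i, j) \<in> D \<and> (i, j + 1) \<in> D \<and> (i + 1, j) \<in> D \<and> (i + 1, j + 1) \<in> D)"

definition border_strip :: "nat list \<Rightarrow> nat list \<Rightarrow> bool" where
  "border_strip lam mu \<longleftrightarrow> is_partition lam \<and> is_partition mu \<and> contained mu lam \<and>
     edge_connected (skew_diagram lam mu) \<and> no_2x2_square (skew_diagram lam mu)"

definition bs_le :: "nat \<times> nat \<Rightarrow> nat \<times> nat \<Rightarrow> bool" where
  "bs_le a b \<longleftrightarrow> fst a \<ge> fst b \<and> snd a \<ge> snd b"

definition reversed_schur_labeling :: "(nat \<times> nat) set \<Rightarrow> (nat \<times> nat \<Rightarrow> nat) \<Rightarrow> bool" where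
  "reversed_schur_labeling D \<omega> \<longleftrightarrow> bij_betw \<omega> D {1..card D} \<and>
     (\<forall>a\<in>D. \<forall>b\<in>D. content a < content b \<longrightarrow> \<omega> a > \<omega> b)"

text \<open>Linear extensions: order-preserving bijections onto {1..n}, taken extensional
  so that the set is finite.\<close>
definition linear_extensions :: "(nat \<times> nat) set \<Rightarrow> ((nat \<times> nat) \<Rightarrow> nat) set" where
  "linear_extensions D = {g \<in> D \<rightarrow>\<^sub>E {1..card D}. bij_betw g D {1..card D} \<and>
     (\<forall>a\<in>D. \<forall>b\<in>D. bs_le a b \<longrightarrow> g a \<le> g b)}"

text \<open>Words sigma_1 ... sigma_n are functions on positions 1..n.\<close>
definition maj :: "nat \<Rightarrow> (nat \<Rightarrow> nat) \<Rightarrow> nat" where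
  "maj n \<sigma> = (\<Sum>i\<in>{i. 1 \<le> i \<and> i < n \<and> \<sigma> i > \<sigma> (i + 1)}. i)"

definition inv_stat :: "nat \<Rightarrow> (nat \<Rightarrow> nat) \<Rightarrow> nat" where
  "inv_stat n \<sigma> = card {(i, j). 1 \<le> i \<and> i < j \<and> j \<le> n \<and> \<sigma> i > \<sigma> j}"

definition word_of :: "(nat \<times> nat) set \<Rightarrow> (nat \<times> nat \<Rightarrow> nat) \<Rightarrow> (nat \<times> nat \<Rightarrow> nat) \<Rightarrow> nat \<Rightarrow> nat" where
  "word_of D \<omega> g = (\<lambda>i. \<omega> (inv_into D g i))"

definition eq_stat :: "(nat \<Rightarrow> (nat \<Rightarrow> nat) \<Rightarrow> nat) \<Rightarrow> (nat \<times> nat) set \<Rightarrow> (nat \<times> nat \<Rightarrow> nat) \<Rightarrow> int poly" where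
  "eq_stat stat D \<omega> = (\<Sum>g\<in>linear_extensions D. monom 1 (stat (card D) (word_of D \<omega> g)))"

end

theory Submission
  imports Defs "HOL-Library.Multiset"
begin

text \<open>Reading a linear extension \<open>g\<close> as the word \<open>\<omega> \<circ> g\<inverse>\<close> identifies the linear extensions of
  the strip with the permutations of \<open>[n]\<close> in which \<open>m + 1\<close> precedes \<open>m\<close> exactly when the cell
  labelled \<open>m + 1\<close> lies directly below the cell labelled \<open>m\<close>: consecutive labels sit on
  edge-adjacent cells, one step left or one step down, and these steps generate the order of
  the strip. So both sides are generating functions over the permutations with a prescribed
  inverse descent set. Foata's second fundamental transformation carries \<open>maj\<close> to \<open>inv\<close> and
  never changes the relative order of two letters \<open>u\<close> and \<open>u + 1\<close>, hence it permutes this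
  class and the two generating functions agree.\<close>

fun inv_list :: "nat list \<Rightarrow> nat" where
  "inv_list [] = 0"
| "inv_list (x # xs) = length (filter (\<lambda>y. y < x) xs) + inv_list xs"

definition cross_inv :: "nat list \<Rightarrow> nat list \<Rightarrow> nat" where
  "cross_inv xs ys = (\<Sum>x\<leftarrow>xs. length (filter (\<lambda>y. y < x) ys))"

definition maj_list :: "nat list \<Rightarrow> nat" where
  "maj_list xs = (\<Sum>i\<in>{i. 1 \<le> i \<and> i < length xs \<and> xs ! (i - 1) > xs ! i}. i)"

lemma length_filter_mset_eq: "mset xs = mset ys \<Longrightarrow> length (filter P xs) = length (filter P ys)"
  by (metis mset_filter size_mset)

lemma cross_inv_Nil [simp]: "cross_inv [] ys = 0" "cross_inv xs [] = 0"
  unfolding cross_inv_def by (simp, induction xs, auto)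

lemma cross_inv_Cons [simp]:
  "cross_inv (x # xs) ys = length (filter (\<lambda>y. y < x) ys) + cross_inv xs ys"
  by (simp add: cross_inv_def)

lemma cross_inv_append_right: "cross_inv xs (ys @ zs) = cross_inv xs ys + cross_inv xs zs"
  by (induction xs) auto

lemma cross_inv_singleton_right: "cross_inv xs [a] = length (filter (\<lambda>x. a < x) xs)"
  by (induction xs) auto

lemma cross_inv_mset_right: "mset ys = mset zs \<Longrightarrow> cross_inv xs ys = cross_inv xs zs"
  by (induction xs) (auto dest: length_filter_mset_eq)

lemma inv_list_append: "inv_list (xs @ ys) = inv_list xs + inv_list ys + cross_inv xs ys"
  by (induction xs) auto

lemma inv_list_snoc: "inv_list (xs @ [a]) = inv_list xs + length (filter (\<lambda>x. a < x) xs)"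
  by (simp add: inv_list_append cross_inv_singleton_right)

lemma inv_list_eq_card: "inv_list xs = card {(i, j). i < j \<and> j < length xs \<and> xs ! i > xs ! j}"
proof (induction xs)
  case Nil
  then show ?case by simp
next
  case (Cons x xs)
  let ?A = "{(i, j). i < j \<and> j < length xs \<and> xs ! i > xs ! j}"
  let ?B = "{(i, j). i < j \<and> j < length (x # xs) \<and> (x # xs) ! i > (x # xs) ! j}"
  have split: "?B = (\<lambda>j. (0, Suc j)) ` {j. j < length xs \<and> xs ! j < x} \<union> (\<lambda>(i, j). (Suc i, Suc j)) ` ?A"
  proof (rule set_eqI, clarify)
    fix i j
    show "(i, j) \<in> ?B \<longleftrightarrow> (i, j) \<in> (\<lambda>j. (0, Suc j)) ` {j. j < length xs \<and> xs ! j < x} \<union> (\<lambda>(i, j). (Suc i, Suc j)) ` ?A"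
      by (cases i; cases j) (auto simp: image_iff)
  qed
  have "finite ?A" by (rule finite_subset[of _ "{..<length xs} \<times> {..<length xs}"]) auto
  then have "card ?B = card {j. j < length xs \<and> xs ! j < x} + card ?A"
    unfolding split by (subst card_Un_disjoint) (auto simp: card_image inj_on_def intro!: card_image)
  then show ?case using Cons by (simp add: length_filter_conv_card)
qed

lemma maj_list_snoc:
  "maj_list (xs @ [a]) = maj_list xs + (if xs \<noteq> [] \<and> a < last xs then length xs else 0)"
proof -
  let ?S = "{i. 1 \<le> i \<and> i < length xs \<and> xs ! (i - 1) > xs ! i}"
  let ?T = "{i. i = length xs \<and> xs \<noteq> [] \<and> a < last xs}"
  have split: "{i. 1 \<le> i \<and> i < length (xs @ [a]) \<and> (xs @ [a]) ! (i - 1) > (xs @ [a]) ! i} = ?S \<union> ?T"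
  proof (rule set_eqI)
    fix i
    consider "i < length xs" | "i = length xs" | "i > length xs" by linarith
    then show "i \<in> {i. 1 \<le> i \<and> i < length (xs @ [a]) \<and> (xs @ [a]) ! (i - 1) > (xs @ [a]) ! i} \<longleftrightarrow> i \<in> ?S \<union> ?T"
    proof cases
      case 1
      then have "i - 1 < length xs" by simp
      with 1 show ?thesis by (simp add: nth_append)
    next
      case 2
      then show ?thesis by (cases xs rule: rev_cases) (auto simp: nth_append)
    qed simp
  qed
  have "finite ?S" by (rule finite_subset[of _ "{..<length xs}"]) auto
  moreover have "finite ?T" by (rule finite_subset[of _ "{length xs}"]) auto
  ultimately have "maj_list (xs @ [a]) = maj_list xs + sum id ?T"
    unfolding maj_list_def split by (subst sum.union_disjoint) auto
  also have "sum id ?T = (if xs \<noteq> [] \<and> a < last xs then length xs else 0)"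
    by auto
  finally show ?thesis .
qed

lemma inv_stat_eq_inv_list: "inv_stat n \<sigma> = inv_list (map \<sigma> [1..<Suc n])"
proof -
  let ?xs = "map \<sigma> [1..<Suc n]"
  let ?B = "{(i, j). 1 \<le> i \<and> i < j \<and> j \<le> n \<and> \<sigma> i > \<sigma> j}"
  have "{(i, j). i < j \<and> j < length ?xs \<and> ?xs ! i > ?xs ! j} = (\<lambda>(i, j). (i - 1, j - 1)) ` ?B"
  proof (rule set_eqI, clarify)
    fix i j
    show "(i, j) \<in> {(i, j). i < j \<and> j < length ?xs \<and> ?xs ! i > ?xs ! j} \<longleftrightarrow> (i, j) \<in> (\<lambda>(i, j). (i - 1, j - 1)) ` ?B"
    proof
      assume "(i, j) \<in> {(i, j). i < j \<and> j < length ?xs \<and> ?xs ! i > ?xs ! j}"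
      then have "(Suc i, Suc j) \<in> ?B" by (auto simp del: upt_Suc)
      then show "(i, j) \<in> (\<lambda>(i, j). (i - 1, j - 1)) ` ?B" by force
    qed (auto simp del: upt_Suc)
  qed
  moreover have "inj_on (\<lambda>(i, j). (i - 1, j - 1)) ?B"
    by (auto simp: inj_on_def)
  ultimately show ?thesis unfolding inv_stat_def inv_list_eq_card by (simp add: card_image)
qed

lemma maj_eq_maj_list: "maj n \<sigma> = maj_list (map \<sigma> [1..<Suc n])"
proof -
  have "{i. 1 \<le> i \<and> i < length (map \<sigma> [1..<Suc n]) \<and> map \<sigma> [1..<Suc n] ! (i - 1) > map \<sigma> [1..<Suc n] ! i}
      = {i. 1 \<le> i \<and> i < n \<and> \<sigma> i > \<sigma> (i + 1)}"
    by (rule Collect_cong) (auto simp del: upt_Suc)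
  then show ?thesis unfolding maj_def maj_list_def by simp
qed

text \<open>\<open>foata_cycle P\<close> cuts a word into blocks, each ending in a letter satisfying \<open>P\<close>, and
  moves the last letter of every block to its front (\<open>acc\<close> is the block read so far);
  \<open>foata_uncycle\<close> carries the first letter of each block back to its end.\<close>

fun foata_cycle :: "(nat \<Rightarrow> bool) \<Rightarrow> nat list \<Rightarrow> nat list \<Rightarrow> nat list" where
  "foata_cycle P acc [] = acc"
| "foata_cycle P acc (x # xs) =
     (if P x then x # acc @ foata_cycle P [] xs else foata_cycle P (acc @ [x]) xs)"

fun foata_uncycle :: "(nat \<Rightarrow> bool) \<Rightarrow> nat option \<Rightarrow> nat list \<Rightarrow> nat list" where
  "foata_uncycle P None [] = []"
| "foata_uncycle P (Some b) [] = [b]"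
| "foata_uncycle P None (x # xs) = foata_uncycle P (Some x) xs"
| "foata_uncycle P (Some b) (x # xs) =
     (if P x then b # foata_uncycle P (Some x) xs else x # foata_uncycle P (Some b) xs)"

definition foata_step :: "nat \<Rightarrow> nat list \<Rightarrow> nat list" where
  "foata_step a w =
     (if last w \<le> a then foata_cycle (\<lambda>x. x \<le> a) [] w else foata_cycle (\<lambda>x. a < x) [] w)"

definition foata :: "nat list \<Rightarrow> nat list" where
  "foata xs = foldl (\<lambda>w a. foata_step a w @ [a]) [] xs"

lemma mset_foata_cycle: "mset (foata_cycle P acc xs) = mset (acc @ xs)"
  by (induction P acc xs rule: foata_cycle.induct) auto

lemma foata_cycle_hd:
  assumes "xs \<noteq> []" "P (last xs)"
  shows "foata_cycle P acc xs \<noteq> [] \<and> P (hd (foata_cycle P acc xs))"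
  using assms by (induction xs arbitrary: acc) (auto split: if_splits)

lemma foata_uncycle_append:
  "\<forall>y\<in>set ys. \<not> P y \<Longrightarrow> foata_uncycle P (Some b) (ys @ zs) = ys @ foata_uncycle P (Some b) zs"
  by (induction ys) auto

lemma foata_uncycle_cycle_Some:
  assumes "\<forall>y\<in>set acc. \<not> P y" "xs = [] \<Longrightarrow> acc = []" "xs \<noteq> [] \<Longrightarrow> P (last xs)"
  shows "foata_uncycle P (Some b) (foata_cycle P acc xs) = b # acc @ xs"
  using assms
proof (induction xs arbitrary: acc b)
  case (Cons x xs acc b)
  show ?case
  proof (cases "P x")
    case True
    have "foata_uncycle P (Some x) (foata_cycle P [] xs) = x # xs"
      using Cons.IH[of "[]"] Cons.prems(3) by (cases xs) auto
    then show ?thesis using True Cons.prems(1) by (simp add: foata_uncycle_append)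
  next
    case False
    then show ?thesis using Cons by (cases xs) auto
  qed
qed simp

lemma foata_uncycle_cycle:
  assumes "\<forall>y\<in>set acc. \<not> P y" "xs \<noteq> []" "P (last xs)"
  shows "foata_uncycle P None (foata_cycle P acc xs) = acc @ xs"
  using assms
proof (induction xs arbitrary: acc)
  case (Cons x xs acc)
  show ?case
  proof (cases "P x")
    case True
    have "foata_uncycle P (Some x) (foata_cycle P [] xs) = x # xs"
      using foata_uncycle_cycle_Some[of "[]" P xs x] Cons.prems(3) by (cases xs) auto
    then show ?thesis using True Cons.prems(1) by (simp add: foata_uncycle_append)
  next
    case False
    then show ?thesis using Cons by (cases xs) auto
  qed
qed simp

text \<open>Cycling the last letter of a block to its front removes (or, in the second version,
  creates) exactly one inversion for every letter of the block that fails \<open>P\<close>.\<close>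

lemma inv_list_foata_cycle_small:
  assumes "\<forall>x\<in>set acc. \<not> P x" "xs = [] \<Longrightarrow> acc = []" "xs \<noteq> [] \<Longrightarrow> P (last xs)"
    and small: "\<And>x y. P x \<Longrightarrow> \<not> P y \<Longrightarrow> x < y"
  shows "inv_list (foata_cycle P acc xs) + length (filter (\<lambda>x. \<not> P x) (acc @ xs)) = inv_list (acc @ xs)"
  using assms(1-3)
proof (induction xs arbitrary: acc)
  case (Cons x xs acc)
  show ?case
  proof (cases "P x")
    case True
    have ih: "inv_list (foata_cycle P [] xs) + length (filter (\<lambda>x. \<not> P x) xs) = inv_list xs"
      using Cons.IH[of "[]"] Cons.prems(3) by (cases xs) auto
    have m: "mset (foata_cycle P [] xs) = mset xs" by (simp add: mset_foata_cycle)
    have "\<forall>y\<in>set acc. x < y" using Cons.prems(1) True small by blast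
    then have "filter (\<lambda>y. y < x) acc = []" by (auto simp: filter_empty_conv)
    moreover have "cross_inv acc [x] = length acc"
      using Cons.prems(1) True small by (simp add: cross_inv_singleton_right)
    ultimately show ?thesis
      using True ih cross_inv_mset_right[OF m, of acc] length_filter_mset_eq[OF m, of "\<lambda>y. y < x"]
        Cons.prems(1) cross_inv_append_right[of acc "[x]" xs]
      by (simp add: inv_list_append)
  next
    case False
    then have "xs \<noteq> []" using Cons.prems(3) by auto
    then show ?thesis using Cons.IH[of "acc @ [x]"] Cons.prems(1,3) False by simp
  qed
qed simp

lemma inv_list_foata_cycle_large:
  assumes "\<forall>x\<in>set acc. \<not> P x" "xs = [] \<Longrightarrow> acc = []" "xs \<noteq> [] \<Longrightarrow> P (last xs)"
    and large: "\<And>x y. P x \<Longrightarrow> \<not> P y \<Longrightarrow> y < x"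
  shows "inv_list (foata_cycle P acc xs) = inv_list (acc @ xs) + length (filter (\<lambda>x. \<not> P x) (acc @ xs))"
  using assms(1-3)
proof (induction xs arbitrary: acc)
  case (Cons x xs acc)
  show ?case
  proof (cases "P x")
    case True
    have ih: "inv_list (foata_cycle P [] xs) = inv_list xs + length (filter (\<lambda>x. \<not> P x) xs)"
      using Cons.IH[of "[]"] Cons.prems(3) by (cases xs) auto
    have m: "mset (foata_cycle P [] xs) = mset xs" by (simp add: mset_foata_cycle)
    have "\<forall>y\<in>set acc. y < x" using Cons.prems(1) True large by blast
    then have "filter (\<lambda>y. y < x) acc = acc" "cross_inv acc [x] = 0"
      by (auto simp: filter_id_conv cross_inv_singleton_right filter_empty_conv)
    moreover have "filter (\<lambda>x. \<not> P x) acc = acc" using Cons.prems(1) by (simp add: filter_id_conv)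
    ultimately show ?thesis
      using True ih cross_inv_mset_right[OF m, of acc] length_filter_mset_eq[OF m, of "\<lambda>y. y < x"]
        cross_inv_append_right[of acc "[x]" xs]
      by (simp add: inv_list_append)
  next
    case False
    then have "xs \<noteq> []" using Cons.prems(3) by auto
    then show ?thesis using Cons.IH[of "acc @ [x]"] Cons.prems(1,3) False by simp
  qed
qed simp

lemma filter_foata_cycle:
  assumes "\<forall>x\<in>set (acc @ xs). Q x \<longrightarrow> (P x \<longleftrightarrow> b)" and "\<forall>x\<in>set acc. \<not> P x"
  shows "filter Q (foata_cycle P acc xs) = filter Q (acc @ xs)"
  using assms
proof (induction xs arbitrary: acc)
  case (Cons x xs acc)
  show ?case
  proof (cases "P x")
    case True
    then have "filter Q (foata_cycle P [] xs) = filter Q xs"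
      using Cons.IH[of "[]"] Cons.prems(1) by simp
    moreover have "Q x \<Longrightarrow> filter Q acc = []"
      using Cons.prems True by (auto simp: filter_empty_conv)
    ultimately show ?thesis using True by simp
  next
    case False
    then show ?thesis using Cons.IH[of "acc @ [x]"] Cons.prems by simp
  qed
qed simp

text \<open>The first letter of \<open>foata_step a w\<close> lies on the same side of \<open>a\<close> as the last letter of
  \<open>w\<close>, which tells the inverse which cycling to undo.\<close>

definition foata_unstep :: "nat \<Rightarrow> nat list \<Rightarrow> nat list" where
  "foata_unstep a w =
     (if hd w \<le> a then foata_uncycle (\<lambda>x. x \<le> a) None w else foata_uncycle (\<lambda>x. a < x) None w)"

lemma foata_unstep_step: "foata_unstep a (foata_step a w) = w"
proof (cases "w = []")
  case False
  then show ?thesis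
    using foata_cycle_hd[OF False, of "\<lambda>x. x \<le> a" "[]"] foata_cycle_hd[OF False, of "\<lambda>x. a < x" "[]"]
      foata_uncycle_cycle[of "[]" "\<lambda>x. x \<le> a" w] foata_uncycle_cycle[of "[]" "\<lambda>x. a < x" w]
    by (auto simp: foata_step_def foata_unstep_def)
qed (simp add: foata_step_def foata_unstep_def)

lemma mset_foata_step: "mset (foata_step a w) = mset w"
  by (simp add: foata_step_def mset_foata_cycle)

lemma inv_list_foata_step:
  "inv_list (foata_step a w @ [a]) = inv_list w + (if w \<noteq> [] \<and> a < last w then length w else 0)"
proof (cases "w = []")
  case False
  show ?thesis
  proof (cases "last w \<le> a")
    case True
    have "inv_list (foata_cycle (\<lambda>x. x \<le> a) [] w) + length (filter (\<lambda>x. a < x) w) = inv_list w"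
      using inv_list_foata_cycle_small[of "[]" "\<lambda>x. x \<le> a" w] False True by (auto simp: not_le)
    moreover have "length (filter (\<lambda>x. a < x) (foata_cycle (\<lambda>x. x \<le> a) [] w)) = length (filter (\<lambda>x. a < x) w)"
      using length_filter_mset_eq[OF mset_foata_cycle] by simp
    ultimately show ?thesis using True by (simp add: foata_step_def inv_list_snoc)
  next
    case large: False
    have "inv_list (foata_cycle (\<lambda>x. a < x) [] w) = inv_list w + length (filter (\<lambda>x. \<not> a < x) w)"
      using inv_list_foata_cycle_large[of "[]" "\<lambda>x. a < x" w] False large by auto
    moreover have "length (filter (\<lambda>x. a < x) (foata_cycle (\<lambda>x. a < x) [] w)) = length (filter (\<lambda>x. a < x) w)"
      using length_filter_mset_eq[OF mset_foata_cycle] by simp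
    moreover have "length (filter (\<lambda>x. \<not> a < x) w) + length (filter (\<lambda>x. a < x) w) = length w"
      by (metis add.commute sum_length_filter_compl)
    ultimately show ?thesis using large False by (simp add: foata_step_def inv_list_snoc)
  qed
qed (simp add: foata_step_def)

text \<open>The letters \<open>u\<close> and \<open>Suc u\<close> lie on the same side of any other letter \<open>a\<close>, so cycling
  the blocks cut out by \<open>a\<close> keeps them in their relative order.\<close>

lemma filter_consecutive_foata_step:
  assumes "a \<notin> set w"
  shows "filter (\<lambda>x. x = u \<or> x = Suc u) (foata_step a w) = filter (\<lambda>x. x = u \<or> x = Suc u) w"
proof -
  let ?Q = "\<lambda>x. x = u \<or> x = Suc u"
  have "\<forall>x\<in>set w. ?Q x \<longrightarrow> (x \<le> a \<longleftrightarrow> u < a)" and "\<forall>x\<in>set w. ?Q x \<longrightarrow> (a < x \<longleftrightarrow> a \<le> u)"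
    using assms by (auto simp: le_less)
  then have "filter ?Q (foata_cycle (\<lambda>x. x \<le> a) [] w) = filter ?Q w"
    and "filter ?Q (foata_cycle (\<lambda>x. a < x) [] w) = filter ?Q w"
    using filter_foata_cycle[of "[]" w ?Q "\<lambda>x. x \<le> a" "u < a"]
      filter_foata_cycle[of "[]" w ?Q "\<lambda>x. a < x" "a \<le> u"] by simp_all
  then show ?thesis by (simp add: foata_step_def)
qed

lemma foata_Nil [simp]: "foata [] = []"
  by (simp add: foata_def)

lemma foata_snoc: "foata (xs @ [a]) = foata_step a (foata xs) @ [a]"
  by (simp add: foata_def)

lemma mset_foata: "mset (foata xs) = mset xs"
  by (induction xs rule: rev_induct) (auto simp: foata_snoc mset_foata_step)

lemma length_foata: "length (foata xs) = length xs"
  by (metis mset_foata size_mset)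

lemma last_foata: "xs \<noteq> [] \<Longrightarrow> last (foata xs) = last xs"
  by (induction xs rule: rev_induct) (auto simp: foata_snoc)

lemma inj_foata: "inj foata"
proof (rule injI)
  show "xs = ys" if "foata xs = foata ys" for xs ys
    using that
  proof (induction xs arbitrary: ys rule: rev_induct)
    case Nil
    then show ?case using length_foata[of ys] by simp
  next
    case (snoc a xs ys)
    have "ys \<noteq> []" using snoc.prems by (auto simp: foata_snoc)
    then obtain ys' b where ys: "ys = ys' @ [b]" by (cases ys rule: rev_cases) auto
    then have "a = b" and "foata_step a (foata xs) = foata_step a (foata ys')"
      using snoc.prems by (auto simp: foata_snoc)
    then have "foata xs = foata ys'" by (metis foata_unstep_step)
    then show ?case using snoc.IH ys \<open>a = b\<close> by simp
  qed
qed

theorem inv_list_foata: "inv_list (foata xs) = maj_list xs"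
proof (induction xs rule: rev_induct)
  case (snoc a xs)
  show ?case
  proof (cases "xs = []")
    case True
    then show ?thesis by (simp add: foata_def foata_step_def maj_list_def)
  next
    case False
    then have "foata xs \<noteq> []" using length_foata[of xs] by auto
    then show ?thesis using snoc.IH False last_foata[of xs] length_foata[of xs]
      by (simp add: foata_snoc inv_list_foata_step maj_list_snoc)
  qed
qed (simp add: maj_list_def foata_def)

lemma filter_consecutive_foata:
  assumes "distinct xs"
  shows "filter (\<lambda>x. x = u \<or> x = Suc u) (foata xs) = filter (\<lambda>x. x = u \<or> x = Suc u) xs"
  using assms
proof (induction xs rule: rev_induct)
  case (snoc a xs)
  have "a \<notin> set (foata xs)" using snoc.prems mset_eq_setD[OF mset_foata[of xs]] by simp
  then show ?case using snoc by (simp add: foata_snoc filter_consecutive_foata_step)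
qed simp

lemma filter_eq_singleton: "distinct ys \<Longrightarrow> a \<in> set ys \<Longrightarrow> filter (\<lambda>x. x = a) ys = [a]"
  by (induction ys) (auto simp: filter_empty_conv)

lemma filter_nth_pair:
  assumes "distinct xs" "i < j" "j < length xs"
  shows "filter (\<lambda>x. x = xs ! i \<or> x = xs ! j) xs = [xs ! i, xs ! j]"
  using assms
proof (induction xs arbitrary: i j)
  case (Cons y ys i j)
  obtain j' where j: "j = Suc j'" using Cons.prems(2) by (cases j) auto
  show ?case
  proof (cases i)
    case 0
    have "filter (\<lambda>x. x = y \<or> x = ys ! j') ys = filter (\<lambda>x. x = ys ! j') ys"
      using Cons.prems(1) by (intro filter_cong) auto
    also have "\<dots> = [ys ! j']"
      using Cons.prems j by (intro filter_eq_singleton) auto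
    finally show ?thesis using 0 j by simp
  next
    case (Suc i')
    have "y \<noteq> ys ! i'" "y \<noteq> ys ! j'" using Cons.prems Suc j by (auto simp: nth_mem)
    then show ?thesis using Cons.IH[of i' j'] Cons.prems Suc j by simp
  qed
qed simp

definition precedes :: "nat list \<Rightarrow> nat \<Rightarrow> nat \<Rightarrow> bool" where
  "precedes xs a b \<longleftrightarrow> filter (\<lambda>x. x = a \<or> x = b) xs = [a, b]"

lemma precedes_nth_iff:
  assumes "distinct xs" "i < length xs" "j < length xs" "i \<noteq> j"
  shows "precedes xs (xs ! i) (xs ! j) \<longleftrightarrow> i < j"
proof (cases "i < j")
  case True
  then show ?thesis using filter_nth_pair assms by (simp add: precedes_def)
next
  case False
  then have "filter (\<lambda>x. x = xs ! i \<or> x = xs ! j) xs = [xs ! j, xs ! i]"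
    using filter_nth_pair[of xs j i] assms by (simp add: disj_commute)
  moreover have "xs ! i \<noteq> xs ! j" using assms by (simp add: nth_eq_iff_index_eq)
  ultimately show ?thesis using False by (simp add: precedes_def)
qed

text \<open>\<open>m\<close> is an inverse descent of a permutation when \<open>Suc m\<close> precedes \<open>m\<close>.\<close>

definition perms_with_ides :: "nat \<Rightarrow> (nat \<Rightarrow> bool) \<Rightarrow> nat list set" where
  "perms_with_ides n P =
     {xs. distinct xs \<and> set xs = {1..n} \<and> (\<forall>m\<in>{1..<n}. precedes xs (Suc m) m \<longleftrightarrow> P m)}"

lemma finite_perms_with_ides: "finite (perms_with_ides n P)"
proof (rule finite_subset)
  show "perms_with_ides n P \<subseteq> {xs. set xs \<subseteq> {1..n} \<and> length xs = n}"
    unfolding perms_with_ides_def by (auto dest: distinct_card)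
qed (simp add: finite_lists_length_eq)

lemma foata_perms_with_ides:
  assumes "xs \<in> perms_with_ides n P"
  shows "foata xs \<in> perms_with_ides n P"
proof -
  have "distinct xs" using assms by (simp add: perms_with_ides_def)
  then have "precedes (foata xs) (Suc m) m \<longleftrightarrow> precedes xs (Suc m) m" for m
    using filter_consecutive_foata[of xs m] by (simp add: precedes_def disj_commute)
  then show ?thesis
    using assms mset_eq_imp_distinct_iff[OF mset_foata] mset_eq_setD[OF mset_foata]
    by (simp add: perms_with_ides_def)
qed

theorem sum_inv_list_eq_sum_maj_list:
  assumes "finite E" "foata ` E \<subseteq> E"
  shows "(\<Sum>xs\<in>E. f (inv_list xs)) = (\<Sum>xs\<in>E. f (maj_list xs))"
proof -
  have "inj_on foata E" using inj_foata by (rule inj_on_subset) simp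
  then have "foata ` E = E" using endo_inj_surj assms by blast
  then have "(\<Sum>xs\<in>E. f (inv_list xs)) = (\<Sum>xs\<in>E. f (inv_list (foata xs)))"
    using sum.reindex[OF \<open>inj_on foata E\<close>, of "\<lambda>xs. f (inv_list xs)"] by simp
  then show ?thesis by (simp add: inv_list_foata)
qed

lemma perms_with_ides_bij_nth:
  assumes "xs \<in> perms_with_ides n P"
  shows "bij_betw ((!) xs) {..<n} {1..n}"
  using assms bij_betw_nth[of xs] distinct_card[of xs] by (simp add: perms_with_ides_def)

lemma perms_with_ides_position_Suc:
  assumes xs: "xs \<in> perms_with_ides n P" and m: "m \<in> {1..<n}"
  shows "inv_into {..<n} ((!) xs) (Suc m) < inv_into {..<n} ((!) xs) m \<longleftrightarrow> P m"
proof -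
  let ?pos = "inv_into {..<n} ((!) xs)"
  have bij: "bij_betw ((!) xs) {..<n} {1..n}" using perms_with_ides_bij_nth[OF xs] .
  have in_range: "?pos v < n \<and> xs ! ?pos v = v" if "v \<in> {1..n}" for v
  proof -
    have "v \<in> (!) xs ` {..<n}" using bij that by (simp add: bij_betw_def)
    then show ?thesis using inv_into_into[of v "(!) xs" "{..<n}"] f_inv_into_f[of v "(!) xs" "{..<n}"]
      by (simp only: lessThan_iff)
  qed
  have "length xs = n" and "distinct xs" using xs distinct_card[of xs] by (auto simp: perms_with_ides_def)
  moreover have "?pos (Suc m) \<noteq> ?pos m" using in_range[of m] in_range[of "Suc m"] m by force
  ultimately have "precedes xs (Suc m) m \<longleftrightarrow> ?pos (Suc m) < ?pos m"
    using precedes_nth_iff[of xs "?pos (Suc m)" "?pos m"] in_range[of m] in_range[of "Suc m"] m by simp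
  then show ?thesis using xs m by (simp add: perms_with_ides_def)
qed

lemma diagram_down_closed:
  assumes "is_partition lam" "(i, j) \<in> diagram lam" "1 \<le> i'" "i' \<le> i" "1 \<le> j'" "j' \<le> j"
  shows "(i', j') \<in> diagram lam"
proof -
  have "lam ! (i - 1) \<le> lam ! (i' - 1)"
  proof (cases "i' < i")
    case True
    then show ?thesis using assms sorted_wrt_nth_less[of "(\<ge>)" lam "i' - 1" "i - 1"]
      by (auto simp: is_partition_def diagram_def)
  qed (use assms in simp)
  then show ?thesis using assms by (auto simp: diagram_def)
qed

text \<open>Two cells of a skew shape on one diagonal span a rectangle inside the shape, which
  contains a \<open>2 \<times> 2\<close> square.\<close>

lemma inj_on_content_skew_diagram:
  assumes lam: "is_partition lam" and mu: "is_partition mu"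
    and no_square: "no_2x2_square (skew_diagram lam mu)"
  shows "inj_on content (skew_diagram lam mu)"
proof -
  let ?S = "skew_diagram lam mu"
  have no_diagonal: "(i + d, j + d) \<notin> ?S" if ij: "(i, j) \<in> ?S" and d: "d \<ge> 1" for i j d
  proof
    assume far: "(i + d, j + d) \<in> ?S"
    have "1 \<le> i" "1 \<le> j" using ij by (auto simp: skew_diagram_def diagram_def)
    then have "(i', j') \<in> diagram lam" if "i \<le> i'" "i' \<le> i + d" "j \<le> j'" "j' \<le> j + d" for i' j'
      using diagram_down_closed[OF lam, of "i + d" "j + d" i' j'] far that by (simp add: skew_diagram_def)
    moreover have "(i', j') \<notin> diagram mu" if "i \<le> i'" "j \<le> j'" for i' j'
      using diagram_down_closed[OF mu, of i' j' i j] ij that \<open>1 \<le> i\<close> \<open>1 \<le> j\<close> by (auto simp: skew_diagram_def)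
    ultimately have "(i, j + 1) \<in> ?S" "(i + 1, j) \<in> ?S" "(i + 1, j + 1) \<in> ?S"
      using d by (auto simp: skew_diagram_def)
    then show False using no_square ij by (auto simp: no_2x2_square_def)
  qed
  show ?thesis
  proof (rule inj_onI)
    fix a b assume a: "a \<in> ?S" and b: "b \<in> ?S" and "content a = content b"
    obtain i j i' j' where ab: "a = (i, j)" "b = (i', j')" by (cases a, cases b)
    with \<open>content a = content b\<close> have "int j - int i = int j' - int i'" by (simp add: content_def)
    then consider "i' = i + (i' - i)" "j' = j + (i' - i)" "i' - i \<ge> 1"
      | "i = i' + (i - i')" "j = j' + (i - i')" "i - i' \<ge> 1" | "i = i'" "j = j'"
      by linarith
    then show "a = b"
      by cases (metis a b ab no_diagonal)+
  qed
qed

lemma edge_adjacent_content_Suc: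
  assumes "edge_adjacent x y" "content y = content x + 1"
  shows "(fst y = fst x \<and> snd y = snd x + 1) \<or> (fst x = fst y + 1 \<and> snd y = snd x)"
  using assms by (auto simp: edge_adjacent_def content_def)

lemma edge_path_crosses_content:
  assumes "(\<lambda>x y. x \<in> S \<and> y \<in> S \<and> edge_adjacent x y)\<^sup>*\<^sup>* a b" "content a \<le> k" "k < content b"
  shows "\<exists>x\<in>S. \<exists>y\<in>S. edge_adjacent x y \<and> content x = k \<and> content y = k + 1"
  using assms
proof (induction rule: rtranclp_induct)
  case (step y z)
  show ?case
  proof (cases "k < content y")
    case False
    moreover have "content z = content y + 1 \<or> content z = content y - 1"
      using step.hyps(2) by (auto simp: edge_adjacent_def content_def)
    ultimately show ?thesis using step by force
  qed (use step in simp)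
qed simp

locale labelled_border_strip =
  fixes lam mu :: "nat list" and \<omega> :: "nat \<times> nat \<Rightarrow> nat"
  assumes border_strip: "border_strip lam mu"
    and labelling: "reversed_schur_labeling (skew_diagram lam mu) \<omega>"
begin

abbreviation S :: "(nat \<times> nat) set" where "S \<equiv> skew_diagram lam mu"
abbreviation N :: nat where "N \<equiv> card S"
abbreviation cell :: "nat \<Rightarrow> nat \<times> nat" where "cell v \<equiv> inv_into S \<omega> v"

lemma bij_label: "bij_betw \<omega> S {1..N}"
  using labelling by (simp add: reversed_schur_labeling_def)

lemma cell_in: "v \<in> {1..N} \<Longrightarrow> cell v \<in> S"
  using bij_label by (metis bij_betw_def inv_into_into)

lemma label_cell: "v \<in> {1..N} \<Longrightarrow> \<omega> (cell v) = v"
  using bij_label by (metis bij_betw_def f_inv_into_f)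

lemma cell_label: "c \<in> S \<Longrightarrow> cell (\<omega> c) = c"
  using bij_label by (metis bij_betw_def inv_into_f_f)

lemma label_in: "c \<in> S \<Longrightarrow> \<omega> c \<in> {1..N}"
  using bij_label by (metis bij_betw_def imageI)

text \<open>Labels decrease with content and each content occurs at most once, so a path between the
  cells labelled \<open>Suc m\<close> and \<open>m\<close> crosses between their diagonals along an edge joining
  exactly these two cells.\<close>

lemma cell_Suc_left_or_below:
  assumes "m \<in> {1..<N}"
  shows "(fst (cell (Suc m)) = fst (cell m) \<and> snd (cell m) = snd (cell (Suc m)) + 1) \<or>
         (fst (cell (Suc m)) = fst (cell m) + 1 \<and> snd (cell m) = snd (cell (Suc m)))"
proof -
  let ?A = "cell (Suc m)" and ?B = "cell m"
  have A: "?A \<in> S" "\<omega> ?A = Suc m" and B: "?B \<in> S" "\<omega> ?B = m"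
    using assms cell_in label_cell by auto
  have label_anti: "\<omega> b < \<omega> a" if "a \<in> S" "b \<in> S" "content a < content b" for a b
    using labelling that by (auto simp: reversed_schur_labeling_def)
  have inj: "inj_on content S"
    using border_strip by (intro inj_on_content_skew_diagram) (auto simp: border_strip_def)
  have "content ?A \<noteq> content ?B" using inj A B by (metis inj_onD n_not_Suc_n)
  moreover have "\<not> content ?B < content ?A" using label_anti[of ?B ?A] A B by auto
  ultimately have less: "content ?A < content ?B" by simp
  have "(\<lambda>x y. x \<in> S \<and> y \<in> S \<and> edge_adjacent x y)\<^sup>*\<^sup>* ?A ?B"
    using border_strip A B by (auto simp: border_strip_def edge_connected_def)
  then obtain x y where xy: "x \<in> S" "y \<in> S" "edge_adjacent x y"
    "content x = content ?A" "content y = content ?A + 1"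
    using edge_path_crosses_content less by fastforce
  have "x = ?A" using inj_onD[OF inj] xy A by metis
  moreover have "y = ?B"
  proof -
    have "\<not> content y < content ?B"
      using label_anti[of y ?B] label_anti[of ?A y] xy A B by auto
    then have "content y = content ?B" using xy less by simp
    then show ?thesis using inj_onD[OF inj] xy B by metis
  qed
  ultimately show ?thesis using edge_adjacent_content_Suc[of x y] xy by auto
qed

definition down_step :: "nat \<Rightarrow> bool" where
  "down_step m \<longleftrightarrow> fst (cell m) < fst (cell (Suc m))"

lemma cell_row_col_count:
  assumes "1 \<le> p" "p \<le> r" "r \<le> N"
  shows "fst (cell r) = fst (cell p) + card {m \<in> {p..<r}. down_step m} \<and>
         snd (cell p) = snd (cell r) + card {m \<in> {p..<r}. \<not> down_step m}"
  using assms(2,3)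
proof (induction r rule: dec_induct)
  case (step r)
  have count: "card {m \<in> {p..<Suc r}. Q m} = card {m \<in> {p..<r}. Q m} + (if Q r then 1 else 0)" for Q
  proof -
    have "{m \<in> {p..<Suc r}. Q m} = (if Q r then insert r {m \<in> {p..<r}. Q m} else {m \<in> {p..<r}. Q m})"
      using step.hyps(1) by (auto simp: less_Suc_eq)
    then show ?thesis by simp
  qed
  have "r \<in> {1..<N}" using assms(1) step.hyps step.prems by simp
  then have "(fst (cell (Suc r)) = fst (cell r) \<and> snd (cell r) = snd (cell (Suc r)) + 1) \<or>
         (fst (cell (Suc r)) = fst (cell r) + 1 \<and> snd (cell r) = snd (cell (Suc r)))"
    by (rule cell_Suc_left_or_below)
  moreover have "fst (cell r) = fst (cell p) + card {m \<in> {p..<r}. down_step m} \<and>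
         snd (cell p) = snd (cell r) + card {m \<in> {p..<r}. \<not> down_step m}"
    using step.IH step.prems by simp
  ultimately show ?case
    using count[of down_step] count[of "\<lambda>m. \<not> down_step m"] unfolding down_step_def by auto
qed simp

lemma bs_le_cell_left_steps:
  assumes "1 \<le> p" "p \<le> r" "r \<le> N" "bs_le (cell p) (cell r)" "m \<in> {p..<r}"
  shows "\<not> down_step m"
proof -
  have "card {m \<in> {p..<r}. down_step m} = 0"
    using cell_row_col_count[of p r] assms(1-4) unfolding bs_le_def by linarith
  then show ?thesis using assms(5) by simp
qed

lemma bs_le_cell_down_steps:
  assumes "1 \<le> r" "r \<le> p" "p \<le> N" "bs_le (cell p) (cell r)" "m \<in> {r..<p}"
  shows "down_step m"
proof -
  have "card {m \<in> {r..<p}. \<not> down_step m} = 0"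
    using cell_row_col_count[of r p] assms(1-4) unfolding bs_le_def by linarith
  then show ?thesis using assms(5) by simp
qed

lemma bs_le_cell_Suc:
  assumes "m \<in> {1..<N}"
  shows "if down_step m then bs_le (cell (Suc m)) (cell m) else bs_le (cell m) (cell (Suc m))"
  using cell_Suc_left_or_below[OF assms] by (auto simp: down_step_def bs_le_def)

definition ext_word :: "(nat \<times> nat \<Rightarrow> nat) \<Rightarrow> nat list" where
  "ext_word g = map (word_of S \<omega> g) [1..<Suc N]"

definition ext_of_word :: "nat list \<Rightarrow> nat \<times> nat \<Rightarrow> nat" where
  "ext_of_word xs = restrict (\<lambda>c. Suc (inv_into {..<N} ((!) xs) (\<omega> c))) S"

lemma length_ext_word [simp]: "length (ext_word g) = N"
  by (simp add: ext_word_def)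

lemma ext_word_nth:
  assumes g: "g \<in> linear_extensions S" and c: "c \<in> S"
  shows "g c \<in> {1..N}" and "ext_word g ! (g c - 1) = \<omega> c"
proof -
  have bij: "bij_betw g S {1..N}" using g by (simp add: linear_extensions_def)
  then show "g c \<in> {1..N}" using c by (auto simp: bij_betw_def)
  then have "ext_word g ! (g c - 1) = \<omega> (inv_into S g (g c))"
    by (auto simp: ext_word_def word_of_def simp del: upt_Suc)
  then show "ext_word g ! (g c - 1) = \<omega> c" using bij c by (simp add: bij_betw_def)
qed

lemma ext_word_perm:
  assumes "g \<in> linear_extensions S"
  shows "distinct (ext_word g)" and "set (ext_word g) = {1..N}"
proof -
  have "bij_betw g S {1..N}" using assms by (simp add: linear_extensions_def)
  then have "bij_betw (\<omega> \<circ> inv_into S g) {1..N} {1..N}"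
    using bij_betw_trans[OF bij_betw_inv_into bij_label] by blast
  then have "bij_betw (word_of S \<omega> g) {1..<Suc N} {1..N}"
    by (simp add: word_of_def comp_def atLeastLessThanSuc_atLeastAtMost)
  then show "distinct (ext_word g)" "set (ext_word g) = {1..N}"
    by (simp_all add: ext_word_def distinct_map bij_betw_def del: upt_Suc)
qed

lemma ext_word_in:
  assumes g: "g \<in> linear_extensions S"
  shows "ext_word g \<in> perms_with_ides N down_step"
proof -
  have "precedes (ext_word g) (Suc m) m \<longleftrightarrow> down_step m" if m: "m \<in> {1..<N}" for m
  proof -
    let ?A = "cell (Suc m)" and ?B = "cell m"
    have A: "?A \<in> S" "\<omega> ?A = Suc m" and B: "?B \<in> S" "\<omega> ?B = m"
      using m cell_in label_cell by auto
    have mono: "g a \<le> g b" if "a \<in> S" "b \<in> S" "bs_le a b" for a b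
      using g that by (simp add: linear_extensions_def)
    have "g ?A \<noteq> g ?B"
      using g A B by (auto simp: linear_extensions_def bij_betw_def inj_on_def)
    moreover have "down_step m \<Longrightarrow> g ?A \<le> g ?B" and "\<not> down_step m \<Longrightarrow> g ?B \<le> g ?A"
      using mono[OF A(1) B(1)] mono[OF B(1) A(1)] bs_le_cell_Suc[OF m] by simp_all
    ultimately have "g ?A < g ?B \<longleftrightarrow> down_step m" by (cases "down_step m") auto
    moreover have "precedes (ext_word g) (Suc m) m \<longleftrightarrow> g ?A < g ?B"
    proof -
      have "g ?A \<in> {1..N}" "g ?B \<in> {1..N}" using ext_word_nth(1) g A B by blast+
      then have "g ?A - 1 < N" "g ?B - 1 < N" "g ?A - 1 \<noteq> g ?B - 1" "g ?A - 1 < g ?B - 1 \<longleftrightarrow> g ?A < g ?B"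
        using \<open>g ?A \<noteq> g ?B\<close> by auto
      then have "precedes (ext_word g) (ext_word g ! (g ?A - 1)) (ext_word g ! (g ?B - 1)) \<longleftrightarrow> g ?A < g ?B"
        using precedes_nth_iff[OF ext_word_perm(1)[OF g], of "g ?A - 1" "g ?B - 1"] by simp
      then show ?thesis using ext_word_nth(2)[OF g A(1)] ext_word_nth(2)[OF g B(1)] A(2) B(2) by simp
    qed
    ultimately show ?thesis by simp
  qed
  then show ?thesis using ext_word_perm[OF g] by (simp add: perms_with_ides_def)
qed

lemma ext_of_word_ext_word:
  assumes g: "g \<in> linear_extensions S"
  shows "ext_of_word (ext_word g) = g"
proof
  fix c
  show "ext_of_word (ext_word g) c = g c"
  proof (cases "c \<in> S")
    case True
    have "inj_on ((!) (ext_word g)) {..<N}"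
      using inj_on_nth[OF ext_word_perm(1)[OF g], of "{..<N}"] by simp
    moreover have "g c - 1 \<in> {..<N}" using ext_word_nth(1)[OF g True] by auto
    ultimately have "inv_into {..<N} ((!) (ext_word g)) (ext_word g ! (g c - 1)) = g c - 1"
      by (rule inv_into_f_f)
    then have "inv_into {..<N} ((!) (ext_word g)) (\<omega> c) = g c - 1"
      using ext_word_nth(2)[OF g True] by simp
    then show ?thesis using ext_word_nth(1)[OF g True] True by (simp add: ext_of_word_def)
  next
    case False
    have "g \<in> S \<rightarrow>\<^sub>E {1..N}" using g by (simp add: linear_extensions_def)
    then have "g c = undefined" using False by (rule PiE_arb)
    then show ?thesis using False by (simp add: ext_of_word_def)
  qed
qed

lemma ext_of_word_in:
  assumes xs: "xs \<in> perms_with_ides N down_step"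
  shows "ext_of_word xs \<in> linear_extensions S"
proof -
  define pos where "pos = inv_into {..<N} ((!) xs)"
  have bij_pos: "bij_betw pos {1..N} {..<N}"
    unfolding pos_def using bij_betw_inv_into[OF perms_with_ides_bij_nth[OF xs]] .
  have "bij_betw Suc {..<N} {1..N}" by (simp add: image_Suc_lessThan)
  then have "bij_betw (Suc \<circ> (pos \<circ> \<omega>)) S {1..N}"
    by (rule bij_betw_trans[OF bij_betw_trans[OF bij_label bij_pos]])
  moreover have "ext_of_word xs c = (Suc \<circ> (pos \<circ> \<omega>)) c" if "c \<in> S" for c
    using that by (simp add: ext_of_word_def pos_def)
  ultimately have bij: "bij_betw (ext_of_word xs) S {1..N}"
    using bij_betw_cong by blast
  have "pos p \<le> pos r" if "p \<in> {1..N}" "r \<in> {1..N}" "bs_le (cell p) (cell r)" for p r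
  proof (cases "p \<le> r")
    case True
    have "pos m \<le> pos (Suc m)" if "m \<in> {p..<r}" for m
      using bs_le_cell_left_steps[of p r m] perms_with_ides_position_Suc[OF xs, of m] \<open>p \<in> {1..N}\<close>
        \<open>r \<in> {1..N}\<close> \<open>bs_le (cell p) (cell r)\<close> True that
      by (auto simp: pos_def)
    then show ?thesis using lift_Suc_mono_le_ivl[of "{p..<r}" pos p r] True by blast
  next
    case False
    have "pos (Suc m) \<le> pos m" if "m \<in> {r..<p}" for m
      using bs_le_cell_down_steps[of r p m] perms_with_ides_position_Suc[OF xs, of m] \<open>p \<in> {1..N}\<close>
        \<open>r \<in> {1..N}\<close> \<open>bs_le (cell p) (cell r)\<close> False that
      by (auto simp: pos_def)
    then show ?thesis using lift_Suc_antimono_le_ivl[of "{r..<p}" pos r p] False by simp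
  qed
  then have "ext_of_word xs a \<le> ext_of_word xs b" if "a \<in> S" "b \<in> S" "bs_le a b" for a b
    using that label_in cell_label by (simp add: ext_of_word_def pos_def)
  moreover have "ext_of_word xs \<in> S \<rightarrow>\<^sub>E {1..N}"
    using bij by (auto simp: ext_of_word_def bij_betw_def)
  ultimately show ?thesis using bij by (simp add: linear_extensions_def)
qed

lemma ext_word_ext_of_word:
  assumes xs: "xs \<in> perms_with_ides N down_step"
  shows "ext_word (ext_of_word xs) = xs"
proof (rule nth_equalityI)
  have len: "length xs = N" and "distinct xs" and set: "set xs = {1..N}"
    using xs distinct_card[of xs] by (auto simp: perms_with_ides_def)
  then show "length (ext_word (ext_of_word xs)) = length xs" by simp
  fix k assume "k < length (ext_word (ext_of_word xs))"
  then have k: "k < N" by simp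
  then have "xs ! k \<in> set xs" using len by simp
  then have v: "xs ! k \<in> {1..N}" using set by simp
  have "inj_on ((!) xs) {..<N}" using inj_on_nth[OF \<open>distinct xs\<close>, of "{..<N}"] len by simp
  then have "inv_into {..<N} ((!) xs) (xs ! k) = k" using k by (simp add: inv_into_f_f)
  then have pos: "ext_of_word xs (cell (xs ! k)) = Suc k"
    using cell_in[OF v] label_cell[OF v] by (simp add: ext_of_word_def)
  have "bij_betw (ext_of_word xs) S {1..N}"
    using ext_of_word_in[OF xs] by (simp add: linear_extensions_def)
  then have "inv_into S (ext_of_word xs) (ext_of_word xs (cell (xs ! k))) = cell (xs ! k)"
    using cell_in[OF v] by (rule bij_betw_inv_into_left)
  then have "inv_into S (ext_of_word xs) (Suc k) = cell (xs ! k)" by (simp only: pos)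
  then show "ext_word (ext_of_word xs) ! k = xs ! k"
    using k label_cell[OF v] by (simp add: ext_word_def word_of_def del: upt_Suc)
qed

lemma sum_linear_extensions_eq_sum_perms:
  "(\<Sum>g\<in>linear_extensions S. F (ext_word g)) = (\<Sum>xs\<in>perms_with_ides N down_step. F xs)"
proof (rule sum.reindex_bij_witness[of _ ext_of_word ext_word])
  show "ext_of_word (ext_word g) = g" "ext_word g \<in> perms_with_ides N down_step"
    if "g \<in> linear_extensions S" for g
    using that by (rule ext_of_word_ext_word, rule ext_word_in)
  show "ext_word (ext_of_word xs) = xs" "ext_of_word xs \<in> linear_extensions S"
    if "xs \<in> perms_with_ides N down_step" for xs
    using that by (rule ext_word_ext_of_word, rule ext_of_word_in)
qed (rule refl)

theorem eq_stat_inv_eq_maj: "eq_stat inv_stat S \<omega> = eq_stat maj S \<omega>"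
proof -
  have inv: "inv_stat N (word_of S \<omega> g) = inv_list (ext_word g)"
    and maj: "maj N (word_of S \<omega> g) = maj_list (ext_word g)" for g
    unfolding ext_word_def by (rule inv_stat_eq_inv_list, rule maj_eq_maj_list)
  have "eq_stat inv_stat S \<omega> = (\<Sum>g\<in>linear_extensions S. monom 1 (inv_list (ext_word g)))"
    unfolding eq_stat_def inv ..
  also have "\<dots> = (\<Sum>xs\<in>perms_with_ides N down_step. monom 1 (inv_list xs))"
    by (rule sum_linear_extensions_eq_sum_perms)
  also have "\<dots> = (\<Sum>xs\<in>perms_with_ides N down_step. monom 1 (maj_list xs))"
    by (rule sum_inv_list_eq_sum_maj_list[OF finite_perms_with_ides]) (auto intro: foata_perms_with_ides)
  also have "\<dots> = (\<Sum>g\<in>linear_extensions S. monom 1 (maj_list (ext_word g)))"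
    by (rule sum_linear_extensions_eq_sum_perms[symmetric])
  also have "\<dots> = eq_stat maj S \<omega>"
    unfolding eq_stat_def maj ..
  finally show ?thesis .
qed

end

theorem corollary7p2:
  fixes lam mu :: "nat list" and \<omega> :: "nat \<times> nat \<Rightarrow> nat"
  assumes "border_strip lam mu"
    and "reversed_schur_labeling (skew_diagram lam mu) \<omega>"
  shows "eq_stat inv_stat (skew_diagram lam mu) \<omega> = eq_stat maj (skew_diagram lam mu) \<omega>"
proof -
  interpret labelled_border_strip lam mu \<omega>
    using assms by unfold_locales
  show ?thesis by (rule eq_stat_inv_eq_maj)
qed

end
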